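(* Let $\mathcal{M}$ be a graph matroid family with rank function $r$. (a) $\mathcal{M}$ is unbounded if and only if every forest is $\mathcal{M}$-independent. (b) If $\mathcal{M}$ is bounded, then the graph consisting of $r(\mathcal{M})+1$ pairwise vertex-disjoint edges is an $\mathcal{M}$-circuit.
   Context: All graphs are finite and simple and have no isolated vertices. A graph matroid family $\mathcal{M}$ assigns to every graph $G$ a matroid $\mathcal{M}(G)$ on $E(G)$ such that (i) every graph isomorphism $V(G)\to V(H)$ induces an isomorphism $\mathcal{M}(G)\to\mathcal{M}(H)$, and (ii) for every subgraph $H$ of $G$, $\mathcal{M}(H)$ is the restriction of $\mathcal{M}(G)$ to $E(H)$. $r(G)$ is the rank of $\mathcal{M}(G)$. $G$ is $\mathcal{M}$-independent if $r(G)=|E(G)|$; an $\mathcal{M}$-circuit is a graph $C$ with $r(C)<|E(C)|$ and $r(C-e)=|E(C)|-1$ for all edges $e$. $\mathcal{M}$ is unbounded if $r(K_n)$ is unbounded in $n$, and bounded otherwise; in the bounded case $r(\mathcal{M})=\lim_n r(K_n)$. *)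

theory Defs
  imports Complex_Main
begin

text \<open>Graphs are finite simple graphs without isolated vertices, on vertices from nat.
  Its vertex set is the union of its edges.\<close>

type_synonym graph = "nat set set"

definition is_graph :: "graph \<Rightarrow> bool" where
  "is_graph G \<longleftrightarrow> finite G \<and> (\<forall>e\<in>G. card e = 2)"

definition matroid :: "'a set \<Rightarrow> ('a set \<Rightarrow> bool) \<Rightarrow> bool" where
  "matroid E indep \<longleftrightarrow>
     finite E \<and> indep {} \<and>
     (\<forall>X. indep X \<longrightarrow> X \<subseteq> E) \<and>
     (\<forall>X Y. indep X \<longrightarrow> Y \<subseteq> X \<longrightarrow> indep Y) \<and>
     (\<forall>X Y. indep X \<longrightarrow> indep Y \<longrightarrow> card X < card Y \<longrightarrow>
        (\<exists>e\<in>Y - X. indep (insert e X)))"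

definition mrank :: "('a set \<Rightarrow> bool) \<Rightarrow> 'a set \<Rightarrow> nat" where
  "mrank indep X = Max (card ` {Y. Y \<subseteq> X \<and> indep Y})"

definition graph_matroid_family :: "(graph \<Rightarrow> nat set set \<Rightarrow> bool) \<Rightarrow> bool" where
  "graph_matroid_family M \<longleftrightarrow>
     (\<forall>G. is_graph G \<longrightarrow> matroid G (M G)) \<and>
     (\<forall>G H (f :: nat \<Rightarrow> nat). is_graph G \<longrightarrow> is_graph H \<longrightarrow>
        bij_betw f (\<Union>G) (\<Union>H) \<longrightarrow> (\<lambda>e. f ` e) ` G = H \<longrightarrow>
        (\<forall>X. X \<subseteq> G \<longrightarrow> (M G X \<longleftrightarrow> M H ((\<lambda>e. f ` e) ` X)))) \<and>
     (\<forall>G H. is_graph G \<longrightarrow> H \<subseteq> G \<longrightarrow>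
        (\<forall>X. X \<subseteq> H \<longrightarrow> (M H X \<longleftrightarrow> M G X)))"

definition gm_rank :: "(graph \<Rightarrow> nat set set \<Rightarrow> bool) \<Rightarrow> graph \<Rightarrow> nat" where
  "gm_rank M G = mrank (M G) G"

definition gm_independent :: "(graph \<Rightarrow> nat set set \<Rightarrow> bool) \<Rightarrow> graph \<Rightarrow> bool" where
  "gm_independent M G \<longleftrightarrow> gm_rank M G = card G"

definition gm_circuit :: "(graph \<Rightarrow> nat set set \<Rightarrow> bool) \<Rightarrow> graph \<Rightarrow> bool" where
  "gm_circuit M C \<longleftrightarrow> gm_rank M C < card C \<and>
     (\<forall>e\<in>C. gm_rank M (C - {e}) = card C - 1)"

definition complete_graph :: "nat \<Rightarrow> graph" where
  "complete_graph n = {{i, j} | i j. i < n \<and> j < n \<and> i \<noteq> j}"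

definition gm_unbounded :: "(graph \<Rightarrow> nat set set \<Rightarrow> bool) \<Rightarrow> bool" where
  "gm_unbounded M \<longleftrightarrow> \<not> bdd_above (range (\<lambda>n. gm_rank M (complete_graph n)))"

text \<open>In the bounded case, r(M) is the limit of r(K_n).\<close>

definition gm_family_rank :: "(graph \<Rightarrow> nat set set \<Rightarrow> bool) \<Rightarrow> nat" where
  "gm_family_rank M = lim (\<lambda>n. gm_rank M (complete_graph n))"

definition forest :: "graph \<Rightarrow> bool" where
  "forest F \<longleftrightarrow> is_graph F \<and>
     \<not> (\<exists>vs. length vs \<ge> 3 \<and> distinct vs \<and>
           (\<forall>i < length vs. {vs ! i, vs ! ((i + 1) mod length vs)} \<in> F))"

end

(*
  Call an edge e spanned by a graph X if adding e to X does not increase the rank.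
  Since the family is invariant under relabelling vertices, a circuit C with an edge uv gives
  many spanned edges: C - uv spans uv, hence every injective relabelling of C - uv spans the
  image of uv.

  If u is a leaf of C (every forest circuit has such an edge), sending u outside and v inside
  a vertex set T with |T| >= |V(C)| shows that K_T spans every edge with exactly one end in T.
  Then the complete graph on |V(C)| vertices spans every edge, so r(K_n) is bounded.
  Conversely, if all forests are independent, matchings of any size show that r(K_n) is
  unbounded.

  If C is a matching, both ends of uv are free, so C - uv spans every edge disjoint from its
  vertices; through a disjoint shifted copy it then spans every edge, and r(K_n) < |C|.
  In the bounded case r(K_n) is eventually r(M), so matchings with at most r(M) edges are
  independent, while a matching with r(M) + 1 edges lies in some K_n of rank r(M).
*)
theory Submission
  imports Defs
begin

section \<open>Rank in a matroid\<close>

lemma matroid_indep_subset: "matroid E ind \<Longrightarrow> ind X \<Longrightarrow> Y \<subseteq> X \<Longrightarrow> ind Y"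
  unfolding matroid_def by blast

lemma matroid_augment:
  assumes "matroid E ind" "ind X" "ind Y" "card X < card Y"
  obtains e where "e \<in> Y - X" "ind (insert e X)"
proof -
  have "\<forall>X Y. ind X \<longrightarrow> ind Y \<longrightarrow> card X < card Y \<longrightarrow> (\<exists>e\<in>Y - X. ind (insert e X))"
    using assms(1) unfolding matroid_def by (elim conjE)
  then show ?thesis using assms(2-4) that by blast
qed

lemma matroid_finite_subset: "matroid E ind \<Longrightarrow> X \<subseteq> E \<Longrightarrow> finite X"
  unfolding matroid_def by (meson finite_subset)

lemma matroid_indep_finite: "matroid E ind \<Longrightarrow> ind X \<Longrightarrow> finite X"
  unfolding matroid_def by (meson finite_subset)

lemma finite_nonempty_indep_subsets:
  assumes "matroid E ind" "X \<subseteq> E"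
  shows "finite {Y. Y \<subseteq> X \<and> ind Y}" "{Y. Y \<subseteq> X \<and> ind Y} \<noteq> {}"
proof -
  have "finite X" using matroid_finite_subset[OF assms] .
  then show "finite {Y. Y \<subseteq> X \<and> ind Y}"
    by (rule rev_finite_subset[OF finite_Pow_iff[THEN iffD2]]) auto
  show "{Y. Y \<subseteq> X \<and> ind Y} \<noteq> {}" using assms(1) unfolding matroid_def by auto
qed

lemma mrank_ge_card_indep:
  assumes "matroid E ind" "X \<subseteq> E" "J \<subseteq> X" "ind J"
  shows "card J \<le> mrank ind X"
  unfolding mrank_def using finite_nonempty_indep_subsets[OF assms(1,2)] assms(3,4)
  by (auto intro!: Max_ge)

lemma mrank_obtain_basis:
  assumes "matroid E ind" "X \<subseteq> E"
  obtains B where "B \<subseteq> X" "ind B" "card B = mrank ind X"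
proof -
  have "mrank ind X \<in> card ` {Y. Y \<subseteq> X \<and> ind Y}"
    unfolding mrank_def using finite_nonempty_indep_subsets[OF assms] by (intro Max_in) auto
  then show ?thesis using that by auto
qed

lemma mrank_le_card:
  assumes "matroid E ind" "X \<subseteq> E"
  shows "mrank ind X \<le> card X"
proof -
  obtain B where "B \<subseteq> X" "card B = mrank ind X" using mrank_obtain_basis[OF assms] .
  moreover have "finite X" using matroid_finite_subset[OF assms] .
  ultimately show ?thesis by (metis card_mono)
qed

lemma mrank_mono:
  assumes "matroid E ind" "Y \<subseteq> E" "X \<subseteq> Y"
  shows "mrank ind X \<le> mrank ind Y"
proof -
  obtain B where "B \<subseteq> X" "ind B" "card B = mrank ind X"
    using mrank_obtain_basis[OF assms(1) order_trans[OF assms(3,2)]] .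
  then show ?thesis using mrank_ge_card_indep[OF assms(1,2), of B] assms(3) by simp
qed

lemma mrank_extend_basis:
  assumes "matroid E ind" "X \<subseteq> E" "J \<subseteq> X" "ind J"
  obtains B where "J \<subseteq> B" "B \<subseteq> X" "ind B" "card B = mrank ind X"
proof -
  let ?P = "{B. J \<subseteq> B \<and> B \<subseteq> X \<and> ind B}"
  have fin: "finite ?P"
    using finite_nonempty_indep_subsets(1)[OF assms(1,2)] by (rule rev_finite_subset) auto
  have "Max (card ` ?P) \<in> card ` ?P" using fin assms(3,4) by (intro Max_in) auto
  then obtain B where B: "B \<in> ?P" "card B = Max (card ` ?P)" by auto
  have "card B = mrank ind X"
  proof (rule ccontr)
    assume "card B \<noteq> mrank ind X"
    moreover have "card B \<le> mrank ind X" using mrank_ge_card_indep[OF assms(1,2)] B(1) by blast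
    ultimately have less: "card B < mrank ind X" by simp
    obtain K where K: "K \<subseteq> X" "ind K" "card K = mrank ind X"
      using mrank_obtain_basis[OF assms(1,2)] .
    obtain e where e: "e \<in> K - B" "ind (insert e B)"
      using matroid_augment[OF assms(1), of B K] B(1) K less by auto
    have "insert e B \<in> ?P" using e K B(1) by auto
    then have "card (insert e B) \<le> card B" using B(2) fin by simp
    moreover have "finite B" using matroid_indep_finite[OF assms(1)] B(1) by auto
    ultimately show False using e by simp
  qed
  then show ?thesis using that B(1) by auto
qed

lemma mrank_Un_eq_if_spanned:
  assumes "matroid E ind" "X \<union> Y \<subseteq> E" "\<forall>e\<in>Y. mrank ind (insert e X) = mrank ind X"
  shows "mrank ind (X \<union> Y) = mrank ind X"
proof (rule ccontr)
  assume "mrank ind (X \<union> Y) \<noteq> mrank ind X"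
  with mrank_mono[OF assms(1,2)] have less: "mrank ind X < mrank ind (X \<union> Y)" by force
  obtain B where B: "B \<subseteq> X" "ind B" "card B = mrank ind X"
    using mrank_obtain_basis[OF assms(1), of X] assms(2) by blast
  obtain J where J: "J \<subseteq> X \<union> Y" "ind J" "card J = mrank ind (X \<union> Y)"
    using mrank_obtain_basis[OF assms(1,2)] .
  obtain e where e: "e \<in> J - B" "ind (insert e B)"
    using matroid_augment[OF assms(1) B(2) J(2)] B(3) J(3) less by auto
  have card_eB: "card (insert e B) = mrank ind X + 1"
    using e B(3) matroid_indep_finite[OF assms(1) B(2)] by simp
  have "insert e X \<subseteq> E" "insert e B \<subseteq> insert e X" using assms(2) e J B(1) by auto
  then have "card (insert e B) \<le> mrank ind (insert e X)"
    using mrank_ge_card_indep[OF assms(1)] e(2) by blast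
  moreover have "mrank ind (insert e X) = mrank ind X"
    using assms(3) e J by (cases "e \<in> X") (auto simp: insert_absorb)
  ultimately show False using card_eB by simp
qed

lemma mrank_insert_eq_mono:
  assumes "matroid E ind" "insert e X \<subseteq> E" "A \<subseteq> X" "mrank ind (insert e A) = mrank ind A"
  shows "mrank ind (insert e X) = mrank ind X"
proof (rule ccontr)
  assume "mrank ind (insert e X) \<noteq> mrank ind X"
  with mrank_mono[OF assms(1,2)] have less: "mrank ind X < mrank ind (insert e X)" by force
  have sub: "X \<subseteq> E" "A \<subseteq> E" "insert e A \<subseteq> E" using assms(2,3) by auto
  obtain BA where BA: "BA \<subseteq> A" "ind BA" "card BA = mrank ind A"
    using mrank_obtain_basis[OF assms(1) sub(2)] .
  obtain B where B: "BA \<subseteq> B" "B \<subseteq> X" "ind B" "card B = mrank ind X"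
    using mrank_extend_basis[OF assms(1) sub(1), of BA] BA assms(3) by blast
  obtain J where J: "J \<subseteq> insert e X" "ind J" "card J = mrank ind (insert e X)"
    using mrank_obtain_basis[OF assms(1,2)] .
  obtain f where f: "f \<in> J - B" "ind (insert f B)"
    using matroid_augment[OF assms(1) B(3) J(2)] B(4) J(3) less by auto
  have finite: "finite B" "finite BA"
    using matroid_indep_finite[OF assms(1)] B(3) BA(2) by auto
  show False
  proof (cases "f \<in> X")
    case True
    then have "card (insert f B) \<le> mrank ind X"
      using mrank_ge_card_indep[OF assms(1) sub(1), of "insert f B"] B(2) f(2) by auto
    then show False using f finite B(4) by simp
  next
    case False
    then have "f = e" using f J by auto
    then have "ind (insert e BA)" "e \<notin> BA"
      using matroid_indep_subset[OF assms(1) f(2), of "insert e BA"] f B(1) by auto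
    then have "card (insert e BA) \<le> mrank ind (insert e A)"
      using mrank_ge_card_indep[OF assms(1) sub(3)] BA(1) by blast
    then show False using \<open>e \<notin> BA\<close> finite BA(3) assms(4) by simp
  qed
qed

section \<open>Graphs, matchings and forests\<close>

lemma is_graph_subset: "is_graph G \<Longrightarrow> H \<subseteq> G \<Longrightarrow> is_graph H"
  unfolding is_graph_def by (auto intro: finite_subset)

lemma is_graph_Un: "is_graph G \<Longrightarrow> is_graph H \<Longrightarrow> is_graph (G \<union> H)"
  unfolding is_graph_def by auto

lemma is_graph_insert: "is_graph G \<Longrightarrow> card e = 2 \<Longrightarrow> is_graph (insert e G)"
  unfolding is_graph_def by auto

lemma finite_vertices: "is_graph G \<Longrightarrow> finite (\<Union>G)"
  unfolding is_graph_def by (metis card.infinite finite_Union zero_neq_numeral)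

lemma is_graph_image:
  assumes "is_graph G" "inj_on g (\<Union>G)"
  shows "is_graph ((`) g ` G)"
proof -
  have "card (g ` e) = card e" if "e \<in> G" for e
    using card_image inj_on_subset[OF assms(2) Union_upper[OF that]] by blast
  then show ?thesis using assms(1) unfolding is_graph_def by auto
qed

definition complete_graph_on :: "nat set \<Rightarrow> graph" where
  "complete_graph_on T = {e. e \<subseteq> T \<and> card e = 2}"

lemma complete_graph_eq: "complete_graph n = complete_graph_on {0..<n}"
  unfolding complete_graph_def complete_graph_on_def by (fastforce simp: card_2_iff)

lemma is_graph_complete_graph_on: "finite T \<Longrightarrow> is_graph (complete_graph_on T)"
  unfolding is_graph_def complete_graph_on_def
  by (auto intro: rev_finite_subset[of "Pow T"])

lemma is_graph_complete_graph: "is_graph (complete_graph n)"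
  by (simp add: complete_graph_eq is_graph_complete_graph_on)

lemma complete_graph_on_mono: "S \<subseteq> T \<Longrightarrow> complete_graph_on S \<subseteq> complete_graph_on T"
  unfolding complete_graph_on_def by auto

lemma exists_matching: "\<exists>G. is_graph G \<and> card G = k \<and> pairwise disjnt G"
proof (intro exI conjI)
  let ?G = "(\<lambda>i. {2*i, 2*i+1}) ` {..<k}"
  have "inj_on (\<lambda>i::nat. {2*i, 2*i+1}) {..<k}"
    by (auto simp: inj_on_def doubleton_eq_iff)
  then show "card ?G = k" by (simp add: card_image)
  show "is_graph ?G" unfolding is_graph_def by auto
  show "pairwise disjnt ?G" unfolding pairwise_def disjnt_def by auto presburger+
qed

lemma forest_subset: "forest F \<Longrightarrow> C \<subseteq> F \<Longrightarrow> forest C"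
  unfolding forest_def using is_graph_subset by blast

lemma pairwise_disjnt_imp_forest:
  assumes "is_graph G" "pairwise disjnt G"
  shows "forest G"
  unfolding forest_def
proof (intro conjI assms notI)
  assume "\<exists>vs. 3 \<le> length vs \<and> distinct vs \<and>
    (\<forall>i<length vs. {vs ! i, vs ! ((i + 1) mod length vs)} \<in> G)"
  then obtain vs where vs: "3 \<le> length vs" "distinct vs"
    "\<forall>i<length vs. {vs ! i, vs ! ((i + 1) mod length vs)} \<in> G" by blast
  define L where "L = length vs"
  have e1: "{vs!0, vs!1} \<in> G" using vs(3)[rule_format, of 0] vs(1) L_def by force
  have "Suc (L - 1) = L" using vs(1) L_def by simp
  then have e2: "{vs!(L-1), vs!0} \<in> G"
    using vs(3)[rule_format, of "L - 1"] L_def by simp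
  have "vs!0 \<noteq> vs!1" "vs!0 \<noteq> vs!(L-1)" "vs!1 \<noteq> vs!(L-1)"
    using vs(1,2) L_def by (simp_all add: nth_eq_iff_index_eq del: length_greater_0_conv)
  then have "{vs!0, vs!1} \<noteq> {vs!(L-1), vs!0}" by (auto simp: doubleton_eq_iff)
  then have "disjnt {vs!0, vs!1} {vs!(L-1), vs!0}" by (rule pairwiseD[OF assms(2) e1 e2])
  then show False by (simp add: disjnt_def)
qed

definition graph_path :: "graph \<Rightarrow> nat list \<Rightarrow> bool" where
  "graph_path F vs \<longleftrightarrow> distinct vs \<and> (\<forall>i. Suc i < length vs \<longrightarrow> {vs!i, vs!Suc i} \<in> F)"

lemma length_graph_path_le:
  assumes "is_graph F" "graph_path F vs" "2 \<le> length vs"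
  shows "length vs \<le> card (\<Union>F)"
proof -
  have "set vs \<subseteq> \<Union>F"
  proof
    fix z assume "z \<in> set vs"
    then obtain i where i: "i < length vs" "vs ! i = z" by (auto simp: in_set_conv_nth)
    show "z \<in> \<Union>F"
    proof (cases "Suc i < length vs")
      case True
      then show ?thesis using assms(2) i unfolding graph_path_def by blast
    next
      case False
      then have "Suc (i - 1) < length vs" "Suc (i - 1) = i" using assms(3) i by auto
      then have "{vs!(i-1), vs!i} \<in> F" using assms(2) unfolding graph_path_def by metis
      then show ?thesis using i by blast
    qed
  qed
  then show ?thesis
    using assms(2) card_mono[OF finite_vertices[OF assms(1)]] distinct_card
    unfolding graph_path_def by metis
qed

lemma forest_path_no_closing_edge:
  assumes "forest F" "graph_path F vs" "2 \<le> j" "j < length vs"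
  shows "{vs!0, vs!j} \<notin> F"
proof
  assume closing: "{vs!0, vs!j} \<in> F"
  define ws where "ws = take (Suc j) vs"
  have len: "length ws = Suc j" using assms(4) ws_def by simp
  have "{ws ! i, ws ! ((i + 1) mod length ws)} \<in> F" if "i < length ws" for i
  proof (cases "i < j")
    case True
    then show ?thesis using assms(2,4) len unfolding ws_def graph_path_def by simp
  next
    case False
    then have "i = j" using that len by simp
    then show ?thesis using closing len unfolding ws_def by (simp add: insert_commute)
  qed
  moreover have "3 \<le> length ws" "distinct ws"
    using len assms(2,3) unfolding ws_def graph_path_def by simp_all
  ultimately show False using assms(1) unfolding forest_def by blast
qed

lemma forest_has_leaf:
  assumes "forest C" "C \<noteq> {}"
  obtains u v where "{u,v} \<in> C" "u \<noteq> v" "u \<notin> \<Union>(C - {{u,v}})"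
proof -
  have C: "is_graph C" using assms(1) unfolding forest_def by simp
  obtain x y where "{x,y} \<in> C" "x \<noteq> y"
    using assms(2) C unfolding is_graph_def by (metis card_2_iff ex_in_conv)
  \<comment> \<open>The first vertex of a longest path is a leaf.\<close>
  then have "graph_path C [x,y]" by (auto simp: graph_path_def less_Suc_eq)
  then obtain vs where vs: "graph_path C vs \<and> 2 \<le> length vs"
    and longest: "\<And>ws. graph_path C ws \<and> 2 \<le> length ws \<Longrightarrow> length ws \<le> length vs"
    using ex_has_greatest_nat[of "\<lambda>vs. graph_path C vs \<and> 2 \<le> length vs" "[x,y]" length
        "Suc (card (\<Union>C))"] length_graph_path_le[OF C]
    by (metis le_imp_less_Suc length_Cons list.size(3) numeral_2_eq_2 order_refl)
  let ?u = "vs!0" and ?v = "vs!1"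
  have edge: "{?u, ?v} \<in> C" "?u \<noteq> ?v"
    using vs unfolding graph_path_def by (simp_all add: nth_eq_iff_index_eq del: length_greater_0_conv)
  have unique: "w = ?v" if w: "{?u, w} \<in> C" for w
  proof (cases "w \<in> set vs")
    case False
    have "graph_path C (w # vs)" unfolding graph_path_def
    proof (intro conjI allI impI)
      show "distinct (w # vs)" using False vs by (simp add: graph_path_def)
      fix i assume "Suc i < length (w # vs)"
      then show "{(w # vs) ! i, (w # vs) ! Suc i} \<in> C"
        using vs w by (cases i) (auto simp: graph_path_def insert_commute)
    qed
    then show ?thesis using longest[of "w # vs"] vs by simp
  next
    case True
    then obtain j where j: "j < length vs" "vs ! j = w" by (auto simp: in_set_conv_nth)
    have "j \<noteq> 0"
    proof
      assume "j = 0"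
      then have "{w} \<in> C" using w j by simp
      then show False using C unfolding is_graph_def by fastforce
    qed
    moreover have "\<not> 2 \<le> j" using forest_path_no_closing_edge[OF assms(1)] vs j w by blast
    ultimately have "j = 1" by linarith
    then show ?thesis using j by simp
  qed
  have "?u \<notin> \<Union>(C - {{?u, ?v}})"
  proof
    assume "?u \<in> \<Union>(C - {{?u, ?v}})"
    then obtain d where d: "d \<in> C" "d \<noteq> {?u, ?v}" "?u \<in> d" by blast
    obtain x y where "d = {x, y}" using C d(1) unfolding is_graph_def by (meson card_2_iff)
    then obtain w where "d = {?u, w}" using d(3) by (cases "?u = x") (auto simp: insert_commute)
    then show False using d unique[of w] by simp
  qed
  then show ?thesis using that edge by blast
qed

section \<open>Graph matroid families\<close>

lemma mono_bdd_above_nat_eventually_lim: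
  fixes f :: "nat \<Rightarrow> nat"
  assumes "mono f" "bdd_above (range f)"
  shows "\<exists>n0. \<forall>n\<ge>n0. f n = lim f"
proof -
  have fin: "finite (range f)" using assms(2) by (simp add: bdd_above_nat)
  obtain n0 where n0: "f n0 = Max (range f)" using Max_in[OF fin] by auto
  have eq: "f n = f n0" if "n0 \<le> n" for n
    using monoD[OF assms(1) that] Max_ge[OF fin, of "f n"] n0 by simp
  then have "eventually (\<lambda>n. f n = f n0) sequentially" unfolding eventually_sequentially by blast
  then have "lim f = f n0" by (intro limI tendsto_eventually)
  then show ?thesis using eq by metis
qed

definition gm_spans :: "(graph \<Rightarrow> nat set set \<Rightarrow> bool) \<Rightarrow> graph \<Rightarrow> nat set \<Rightarrow> bool" where
  "gm_spans M X e \<longleftrightarrow> gm_rank M (insert e X) = gm_rank M X"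

lemma gm_spans_mem: "e \<in> X \<Longrightarrow> gm_spans M X e"
  unfolding gm_spans_def by (simp add: insert_absorb)

locale gm_family =
  fixes M :: "graph \<Rightarrow> nat set set \<Rightarrow> bool"
  assumes family: "graph_matroid_family M"
begin

lemma gm_matroid: "is_graph G \<Longrightarrow> matroid G (M G)"
  using family unfolding graph_matroid_family_def by (elim conjE) blast

lemma gm_restrict:
  assumes "is_graph G" "H \<subseteq> G" "X \<subseteq> H"
  shows "M H X = M G X"
proof -
  have "\<forall>G H. is_graph G \<longrightarrow> H \<subseteq> G \<longrightarrow> (\<forall>X. X \<subseteq> H \<longrightarrow> (M H X \<longleftrightarrow> M G X))"
    using family unfolding graph_matroid_family_def by (elim conjE)
  then show ?thesis using assms by blast
qed

lemma gm_iso: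
  assumes "is_graph G" "is_graph H" "bij_betw f (\<Union>G) (\<Union>H)" "(`) f ` G = H" "X \<subseteq> G"
  shows "M G X = M H ((`) f ` X)"
proof -
  have "\<forall>G H (f :: nat \<Rightarrow> nat). is_graph G \<longrightarrow> is_graph H \<longrightarrow>
      bij_betw f (\<Union>G) (\<Union>H) \<longrightarrow> (`) f ` G = H \<longrightarrow>
      (\<forall>X. X \<subseteq> G \<longrightarrow> (M G X \<longleftrightarrow> M H ((`) f ` X)))"
    using family unfolding graph_matroid_family_def by (elim conjE)
  then show ?thesis using assms by blast
qed

lemma gm_rank_eq_mrank: "is_graph G \<Longrightarrow> X \<subseteq> G \<Longrightarrow> gm_rank M X = mrank (M G) X"
  unfolding gm_rank_def mrank_def using gm_restrict[of G X] by (metis (lifting) order.trans)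

lemma gm_rank_le_card: "is_graph X \<Longrightarrow> gm_rank M X \<le> card X"
  unfolding gm_rank_def using mrank_le_card[OF gm_matroid] by blast

lemma gm_rank_mono: "is_graph Y \<Longrightarrow> X \<subseteq> Y \<Longrightarrow> gm_rank M X \<le> gm_rank M Y"
  using gm_rank_eq_mrank mrank_mono[OF gm_matroid order_refl] unfolding gm_rank_def by metis

lemma gm_rank_image:
  assumes "is_graph X" "inj_on g (\<Union>X)"
  shows "gm_rank M ((`) g ` X) = gm_rank M X"
proof -
  let ?H = "(`) g ` X"
  have H: "is_graph ?H" using is_graph_image[OF assms] .
  have bij: "bij_betw g (\<Union>X) (\<Union>?H)" using assms(2) unfolding bij_betw_def by auto
  have "X \<subseteq> Pow (\<Union>X)" by blast
  then have injX: "inj_on ((`) g) X" using inj_on_subset[OF inj_on_image_Pow[OF assms(2)]] by blast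
  have indep_sets: "{Z. Z \<subseteq> ?H \<and> M ?H Z} = (`) ((`) g) ` {Y. Y \<subseteq> X \<and> M X Y}"
  proof (intro equalityI subsetI)
    fix Z assume Z: "Z \<in> {Z. Z \<subseteq> ?H \<and> M ?H Z}"
    let ?Y = "{e \<in> X. g ` e \<in> Z}"
    have "(`) g ` ?Y = Z" using Z by auto
    moreover have "M X ?Y" using gm_iso[OF assms(1) H bij refl, of ?Y] Z calculation by auto
    ultimately show "Z \<in> (`) ((`) g) ` {Y. Y \<subseteq> X \<and> M X Y}" by blast
  qed (use gm_iso[OF assms(1) H bij refl] in auto)
  have "card ` {Z. Z \<subseteq> ?H \<and> M ?H Z} = card ` {Y. Y \<subseteq> X \<and> M X Y}"
    unfolding indep_sets image_image
    by (intro image_cong refl) (auto intro!: card_image inj_on_subset[OF injX])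
  then show ?thesis unfolding gm_rank_def mrank_def by simp
qed

lemma gm_rank_Un_eq_if_spans:
  assumes "is_graph X" "is_graph Y" "\<forall>e\<in>Y. gm_spans M X e"
  shows "gm_rank M (X \<union> Y) = gm_rank M X"
proof -
  let ?G = "X \<union> Y"
  have G: "is_graph ?G" using is_graph_Un[OF assms(1,2)] .
  have "mrank (M ?G) (insert e X) = mrank (M ?G) X" if "e \<in> Y" for e
  proof -
    have "insert e X \<subseteq> ?G" "X \<subseteq> ?G" using that by auto
    then show ?thesis
      using assms(3) that gm_rank_eq_mrank[OF G] unfolding gm_spans_def by simp
  qed
  then have "mrank (M ?G) ?G = mrank (M ?G) X"
    using mrank_Un_eq_if_spanned[OF gm_matroid[OF G] order_refl] by blast
  then show ?thesis using gm_rank_eq_mrank[OF G] by simp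
qed

lemma gm_spans_mono:
  assumes "is_graph X" "A \<subseteq> X" "card e = 2" "gm_spans M A e"
  shows "gm_spans M X e"
proof -
  let ?G = "insert e X"
  have G: "is_graph ?G" using is_graph_insert[OF assms(1,3)] .
  have sub: "insert e A \<subseteq> ?G" "A \<subseteq> ?G" "X \<subseteq> ?G" using assms(2) by auto
  then have "mrank (M ?G) (insert e A) = mrank (M ?G) A"
    using assms(4) gm_rank_eq_mrank[OF G] unfolding gm_spans_def by simp
  then have "mrank (M ?G) ?G = mrank (M ?G) X"
    using mrank_insert_eq_mono[OF gm_matroid[OF G] order_refl assms(2)] by blast
  then show ?thesis
    using gm_rank_eq_mrank[OF G sub(3)] gm_rank_eq_mrank[OF G order_refl] unfolding gm_spans_def by simp
qed

lemma gm_spans_trans: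
  assumes "is_graph X" "is_graph Y" "\<forall>d\<in>Y. gm_spans M X d" "gm_spans M Y e" "card e = 2"
  shows "gm_spans M X e"
proof -
  have XY: "is_graph (X \<union> Y)" using is_graph_Un[OF assms(1,2)] .
  have "gm_rank M (insert e X) \<le> gm_rank M (insert e (X \<union> Y))"
    using gm_rank_mono[OF is_graph_insert[OF XY assms(5)], of "insert e X"] by auto
  also have "\<dots> = gm_rank M (X \<union> Y)"
    using gm_spans_mono[OF XY Un_upper2 assms(5,4)] unfolding gm_spans_def .
  also have "\<dots> = gm_rank M X" using gm_rank_Un_eq_if_spans[OF assms(1-3)] .
  finally have "gm_rank M (insert e X) \<le> gm_rank M X" .
  moreover have "gm_rank M X \<le> gm_rank M (insert e X)"
    by (rule gm_rank_mono[OF is_graph_insert[OF assms(1,5)]]) auto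
  ultimately show ?thesis unfolding gm_spans_def by simp
qed

lemma gm_spans_relabel:
  assumes "is_graph (insert e D)" "gm_spans M D e" "inj_on g (\<Union>(insert e D))"
    "(`) g ` D \<subseteq> X" "is_graph X"
  shows "gm_spans M X (g ` e)"
proof (rule gm_spans_mono[OF assms(5,4)])
  have D: "is_graph D" using is_graph_subset[OF assms(1) subset_insertI] .
  have "inj_on g (\<Union>D)" using inj_on_subset[OF assms(3) Union_mono[OF subset_insertI]] .
  then have "gm_rank M ((`) g ` D) = gm_rank M D" using gm_rank_image[OF D] by blast
  moreover have "gm_rank M (insert (g ` e) ((`) g ` D)) = gm_rank M (insert e D)"
    using gm_rank_image[OF assms(1,3)] by simp
  ultimately show "gm_spans M ((`) g ` D) (g ` e)" using assms(2) unfolding gm_spans_def by simp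
  show "card (g ` e) = 2" using is_graph_image[OF assms(1,3)] unfolding is_graph_def by simp
qed

lemma gm_rank_complete_graph_le_if_spans:
  assumes "is_graph X" "\<And>e. card e = 2 \<Longrightarrow> gm_spans M X e"
  shows "gm_rank M (complete_graph n) \<le> gm_rank M X"
proof -
  have K: "is_graph (complete_graph n)" by (rule is_graph_complete_graph)
  then have "\<forall>e\<in>complete_graph n. gm_spans M X e" using assms(2) unfolding is_graph_def by blast
  then have "gm_rank M (X \<union> complete_graph n) = gm_rank M X"
    using gm_rank_Un_eq_if_spans[OF assms(1) K] by blast
  then show ?thesis using gm_rank_mono[OF is_graph_Un[OF assms(1) K] Un_upper2] by simp
qed

lemma gm_rank_le_complete_graph:
  assumes "is_graph G" "card (\<Union>G) \<le> n"
  shows "gm_rank M G \<le> gm_rank M (complete_graph n)"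
proof -
  obtain h where h: "inj_on h (\<Union>G)" "h ` \<Union>G \<subseteq> {0..<n}"
    using card_le_inj[OF finite_vertices[OF assms(1)], of "{0..<n}"] assms(2) by auto
  have "is_graph ((`) h ` G)" using is_graph_image[OF assms(1) h(1)] .
  then have "(`) h ` G \<subseteq> complete_graph n"
    using h(2) unfolding complete_graph_eq complete_graph_on_def is_graph_def by blast
  then have "gm_rank M ((`) h ` G) \<le> gm_rank M (complete_graph n)"
    by (rule gm_rank_mono[OF is_graph_complete_graph])
  then show ?thesis using gm_rank_image[OF assms(1) h(1)] by simp
qed

lemma mono_gm_rank_complete_graph: "mono (\<lambda>n. gm_rank M (complete_graph n))"
proof
  fix n m :: nat assume "n \<le> m"
  then have "complete_graph n \<subseteq> complete_graph m"
    unfolding complete_graph_eq by (intro complete_graph_on_mono) auto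
  then show "gm_rank M (complete_graph n) \<le> gm_rank M (complete_graph m)"
    by (rule gm_rank_mono[OF is_graph_complete_graph])
qed

lemma gm_circuit_exists:
  "is_graph F \<Longrightarrow> \<not> gm_independent M F \<Longrightarrow> \<exists>C\<subseteq>F. gm_circuit M C"
proof (induction "card F" arbitrary: F rule: less_induct)
  case less
  have fin: "finite F" using less.prems(1) unfolding is_graph_def by simp
  show ?case
  proof (cases "\<forall>e\<in>F. gm_rank M (F - {e}) = card F - 1")
    case True
    have "gm_rank M F < card F"
      using gm_rank_le_card[OF less.prems(1)] less.prems(2) unfolding gm_independent_def by simp
    then show ?thesis using True unfolding gm_circuit_def by blast
  next
    case False
    then obtain e where e: "e \<in> F" "gm_rank M (F - {e}) \<noteq> card (F - {e})"
      using fin by auto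
    have "card (F - {e}) < card F" using fin e(1) by (rule card_Diff1_less)
    then have "\<exists>C\<subseteq>F - {e}. gm_circuit M C"
      using less.hyps is_graph_subset[OF less.prems(1) Diff_subset] e(2)
      unfolding gm_independent_def by blast
    then show ?thesis by blast
  qed
qed

lemma gm_circuit_spans:
  assumes "is_graph C" "gm_circuit M C" "e \<in> C"
  shows "gm_spans M (C - {e}) e"
proof -
  have "insert e (C - {e}) = C" using assms(3) by auto
  moreover have "gm_rank M (C - {e}) \<le> gm_rank M C" using gm_rank_mono[OF assms(1)] by blast
  ultimately show ?thesis using assms(2,3) unfolding gm_circuit_def gm_spans_def by fastforce
qed

lemma gm_spans_off_isolated_edge:
  assumes "is_graph D" "gm_spans M D {u,v}" "u \<noteq> v" "u \<notin> \<Union>D" "v \<notin> \<Union>D"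
    "inj_on h (\<Union>D)" "card e = 2" "e \<inter> h ` \<Union>D = {}"
  shows "gm_spans M ((`) h ` D) e"
proof -
  obtain a b where e: "e = {a,b}" "a \<noteq> b" using assms(7) by (meson card_2_iff)
  define g where "g = h(u := a, v := b)"
  have agree: "g x = h x" if "x \<in> \<Union>D" for x using that assms(4,5) by (auto simp: g_def)
  then have "(`) g ` D = (`) h ` D" by (intro image_cong refl) blast
  moreover have "inj_on g (\<Union>(insert {u,v} D))"
    using assms(3,6,8) e agree by (auto simp: inj_on_def g_def)
  moreover have "g ` {u,v} = e" using assms(3) e by (simp add: g_def)
  ultimately show ?thesis
    using gm_spans_relabel[OF is_graph_insert[OF assms(1)] assms(2), of g] assms(3)
      is_graph_image[OF assms(1,6)] by simp
qed

lemma gm_rank_complete_graph_less_matching_circuit: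
  assumes "is_graph C" "pairwise disjnt C" "gm_circuit M C"
  shows "gm_rank M (complete_graph n) < card C"
proof -
  obtain e0 where e0: "e0 \<in> C" using assms(3) unfolding gm_circuit_def by fastforce
  obtain u v where uv: "e0 = {u,v}" "u \<noteq> v" using assms(1) e0 unfolding is_graph_def by (meson card_2_iff)
  define D where "D = C - {e0}"
  have D: "is_graph D" using is_graph_subset[OF assms(1)] D_def by blast
  have spans: "gm_spans M D {u,v}" using gm_circuit_spans[OF assms(1,3) e0] uv D_def by simp
  have "d \<inter> e0 = {}" if "d \<in> D" for d
    using pairwiseD[OF assms(2), of d e0] that e0 unfolding D_def disjnt_def by blast
  then have off: "u \<notin> \<Union>D" "v \<notin> \<Union>D" using uv(1) by blast+
  have "gm_spans M D e" if e: "card e = 2" for e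
  proof -
    have "finite (e \<union> \<Union>D)" using e finite_vertices[OF D] card.infinite by fastforce
    then obtain m :: nat where m: "\<forall>x\<in>e \<union> \<Union>D. x < m"
      using finite_nat_set_iff_bounded by blast
    \<comment> \<open>A copy of D shifted away from e and D: D spans it edge by edge, and it spans e.\<close>
    define D' where "D' = (`) (\<lambda>x. x + m) ` D"
    have inj: "inj_on (\<lambda>x. x + m) A" for A by (simp add: inj_on_def)
    have D': "is_graph D'" using is_graph_image[OF D inj] D'_def by simp
    have "gm_spans M D d" if "d \<in> D'" for d
      using gm_spans_off_isolated_edge[OF D spans uv(2) off inj_on_id] that D' m
      unfolding D'_def is_graph_def by fastforce
    moreover have "gm_spans M D' e"
      using gm_spans_off_isolated_edge[OF D spans uv(2) off inj e] m unfolding D'_def by fastforce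
    ultimately show ?thesis using gm_spans_trans[OF D D'] e by blast
  qed
  then have "gm_rank M (complete_graph n) \<le> gm_rank M D"
    by (rule gm_rank_complete_graph_le_if_spans[OF D])
  also have "\<dots> \<le> card D" by (rule gm_rank_le_card[OF D])
  also have "\<dots> < card C"
    using card_Diff1_less[of C e0] assms(1) e0 unfolding D_def is_graph_def by blast
  finally show ?thesis .
qed

lemma gm_spans_pendant_edge:
  assumes "is_graph (insert {u,v} D)" "gm_spans M D {u,v}" "u \<noteq> v" "u \<notin> \<Union>D"
    "finite T" "card (\<Union>(insert {u,v} D)) \<le> card T" "a \<notin> T" "b \<in> T"
  shows "gm_spans M (complete_graph_on T) {a,b}"
proof -
  define V where "V = \<Union>(insert {u,v} D)"
  have V: "finite V" "u \<in> V" "v \<in> V" using finite_vertices[OF assms(1)] V_def by auto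
  have "card (V - {u,v}) \<le> card (T - {b})"
    using V assms(3,5,6,8) unfolding V_def[symmetric] by (simp add: card_Diff_subset)
  then obtain h where h: "inj_on h (V - {u,v})" "h ` (V - {u,v}) \<subseteq> T - {b}"
    using card_le_inj[OF finite_Diff[OF V(1)] finite_Diff[OF assms(5)]] by blast
  define g where "g = h(u := a, v := b)"
  have g_rest: "g x = h x" if "x \<in> V - {u,v}" for x using that by (simp add: g_def)
  have inj: "inj_on g V"
  proof -
    have "inj_on g (V - {u,v})"
      by (rule inj_onI) (metis g_rest h(1) inj_onD)
    moreover have "g ` (V - {u,v}) \<subseteq> T - {b}" using h(2) g_rest by fastforce
    moreover have "g u = a" "g v = b" using assms(3) by (simp_all add: g_def)
    ultimately have "inj_on g (insert u (insert v (V - {u,v})))"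
      using assms(7,8) by (auto simp: inj_on_insert)
    moreover have "insert u (insert v (V - {u,v})) = V" using V by auto
    ultimately show ?thesis by simp
  qed
  have "g ` (V - {u}) \<subseteq> T"
    using h(2) g_rest assms(3,8) by (auto simp: g_def)
  then have "(`) g ` D \<subseteq> complete_graph_on T"
    using is_graph_image[OF assms(1) inj[unfolded V_def]] assms(4)
    unfolding complete_graph_on_def is_graph_def V_def by blast
  moreover have "g ` {u,v} = {a,b}" using assms(3) by (simp add: g_def)
  ultimately show ?thesis
    using gm_spans_relabel[OF assms(1,2) inj[unfolded V_def]] is_graph_complete_graph_on[OF assms(5)]
    by metis
qed

lemma gm_spans_complete_graph_on_all:
  assumes "finite S"
    and pendant: "\<And>T a b. finite T \<Longrightarrow> card S \<le> card T \<Longrightarrow> a \<notin> T \<Longrightarrow> b \<in> T \<Longrightarrow>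
      gm_spans M (complete_graph_on T) {a,b}"
    and "card e = 2"
  shows "gm_spans M (complete_graph_on S) e"
proof -
  have touching: "gm_spans M (complete_graph_on S) {x,y}" if "x \<noteq> y" "x \<in> S \<or> y \<in> S" for x y
  proof (cases "x \<in> S \<and> y \<in> S")
    case True
    then show ?thesis using that(1) by (intro gm_spans_mem) (simp add: complete_graph_on_def)
  next
    case False
    then show ?thesis using pendant[OF assms(1) order_refl] that(2) by (metis insert_commute)
  qed
  obtain a b where e: "e = {a,b}" "a \<noteq> b" using assms(3) by (meson card_2_iff)
  show ?thesis
  proof (cases "a \<in> S \<or> b \<in> S")
    case True
    then show ?thesis using touching e by blast
  next
    case False
    define T where "T = insert b S"
    have T: "finite T" "card S \<le> card T" "a \<notin> T" "b \<in> T"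
      using assms(1) False e(2) unfolding T_def by (auto simp: card_insert_le)
    have "\<forall>d\<in>complete_graph_on T. gm_spans M (complete_graph_on S) d"
    proof
      fix d assume "d \<in> complete_graph_on T"
      then obtain x y where "d = {x,y}" "x \<noteq> y" "x \<in> T" "y \<in> T"
        unfolding complete_graph_on_def by (auto simp: card_2_iff)
      then show "gm_spans M (complete_graph_on S) d" using touching T_def by auto
    qed
    then show ?thesis
      using gm_spans_trans[OF is_graph_complete_graph_on[OF assms(1)] is_graph_complete_graph_on[OF T(1)]]
        pendant[OF T] e assms(3) by blast
  qed
qed

lemma forest_circuit_imp_bounded:
  assumes "forest C" "gm_circuit M C"
  shows "\<not> gm_unbounded M"
proof -
  have C: "is_graph C" "C \<noteq> {}" using assms unfolding forest_def gm_circuit_def by auto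
  obtain u v where uv: "{u,v} \<in> C" "u \<noteq> v" "u \<notin> \<Union>(C - {{u,v}})"
    using forest_has_leaf[OF assms(1) C(2)] .
  let ?D = "C - {{u,v}}"
  have C_eq: "insert {u,v} ?D = C" using uv(1) by blast
  have spans: "gm_spans M ?D {u,v}" using gm_circuit_spans[OF C(1) assms(2) uv(1)] .
  define S where "S = {0..<card (\<Union>C)}"
  have "gm_spans M (complete_graph_on S) e" if "card e = 2" for e
    using gm_spans_complete_graph_on_all[of S] gm_spans_pendant_edge[of u v ?D, unfolded C_eq]
      that C(1) spans uv(2,3) unfolding S_def by simp
  then have "gm_rank M (complete_graph n) \<le> gm_rank M (complete_graph_on S)" for n
    using gm_rank_complete_graph_le_if_spans[OF is_graph_complete_graph_on] S_def by simp
  then show ?thesis unfolding gm_unbounded_def bdd_above_def by auto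
qed

lemma gm_unbounded_iff_forests_independent:
  "gm_unbounded M \<longleftrightarrow> (\<forall>F. forest F \<longrightarrow> gm_independent M F)"
proof
  assume unbounded: "gm_unbounded M"
  show "\<forall>F. forest F \<longrightarrow> gm_independent M F"
  proof (intro allI impI)
    fix F assume F: "forest F"
    show "gm_independent M F"
    proof (rule ccontr)
      assume "\<not> gm_independent M F"
      then obtain C where "C \<subseteq> F" "gm_circuit M C"
        using gm_circuit_exists F unfolding forest_def by blast
      then show False using forest_circuit_imp_bounded forest_subset[OF F] unbounded by blast
    qed
  qed
next
  assume indep: "\<forall>F. forest F \<longrightarrow> gm_independent M F"
  show "gm_unbounded M"
    unfolding gm_unbounded_def
  proof
    assume "bdd_above (range (\<lambda>n. gm_rank M (complete_graph n)))"
    then obtain B where B: "\<And>n. gm_rank M (complete_graph n) \<le> B"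
      unfolding bdd_above_def by auto
    obtain G where G: "is_graph G" "card G = Suc B" "pairwise disjnt G"
      using exists_matching by blast
    have "gm_rank M G = Suc B"
      using indep pairwise_disjnt_imp_forest[OF G(1,3)] G(2) unfolding gm_independent_def by simp
    moreover have "gm_rank M G \<le> B"
      using gm_rank_le_complete_graph[OF G(1) order_refl] B order_trans by blast
    ultimately show False by simp
  qed
qed

lemma bounded_imp_matching_circuit:
  assumes "\<not> gm_unbounded M" "is_graph G" "card G = gm_family_rank M + 1" "pairwise disjnt G"
  shows "gm_circuit M G"
proof -
  let ?r = "\<lambda>n. gm_rank M (complete_graph n)"
  have "bdd_above (range ?r)" using assms(1) unfolding gm_unbounded_def by simp
  then obtain n0 where n0: "\<forall>n\<ge>n0. ?r n = gm_family_rank M"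
    using mono_bdd_above_nat_eventually_lim[OF mono_gm_rank_complete_graph]
    unfolding gm_family_rank_def by blast
  have "gm_rank M G \<le> ?r (max n0 (card (\<Union>G)))"
    by (rule gm_rank_le_complete_graph[OF assms(2)]) simp
  then have rank_G: "gm_rank M G < card G" using n0 assms(3) by simp
  have "gm_rank M (G - {e}) = card G - 1" if e: "e \<in> G" for e
  proof -
    have G': "is_graph (G - {e})" using is_graph_subset[OF assms(2) Diff_subset] .
    have card_G': "card (G - {e}) = gm_family_rank M"
      using assms(2,3) e unfolding is_graph_def by simp
    have "gm_independent M (G - {e})"
    proof (rule ccontr)
      assume "\<not> gm_independent M (G - {e})"
      then obtain C where C: "C \<subseteq> G - {e}" "gm_circuit M C" using gm_circuit_exists[OF G'] by blast
      have "?r n0 < card C"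
        using gm_rank_complete_graph_less_matching_circuit[OF is_graph_subset[OF G' C(1)]
            pairwise_subset[OF assms(4)] C(2)] C(1) by blast
      moreover have "card C \<le> card (G - {e})"
        using C(1) G' unfolding is_graph_def by (simp add: card_mono)
      ultimately show False using n0 card_G' by simp
    qed
    then show ?thesis using card_G' assms(3) unfolding gm_independent_def by simp
  qed
  then show ?thesis using rank_G unfolding gm_circuit_def by blast
qed

end

theorem lemma2p4:
  fixes M :: "graph \<Rightarrow> nat set set \<Rightarrow> bool"
  assumes "graph_matroid_family M"
  shows "(gm_unbounded M \<longleftrightarrow> (\<forall>F. forest F \<longrightarrow> gm_independent M F)) \<and>
         (\<not> gm_unbounded M \<longrightarrow>
           (\<forall>G. is_graph G \<and> card G = gm_family_rank M + 1 \<and> pairwise disjnt G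
                \<longrightarrow> gm_circuit M G))"
proof -
  interpret gm_family M using assms by unfold_locales
  show ?thesis using gm_unbounded_iff_forests_independent bounded_imp_matching_circuit by blast
qed

end
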